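(* Let $a<b$ be real, $L:=b-a$, and for real $x$ and real $x_1\ne x_2$ define $$V(x,x_1,x_2):=\frac{e^{-2|x_1-x|}+e^{-2|x_2-x|}-2e^{-(|x_1-x|+|x_2-x|+|x_1-x_2|)}}{1-e^{-2|x_1-x_2|}}.$$ Let $q:=\frac{-e^{-L}+\sqrt{e^{-2L}+8e^{-L}}}{2}$. Then $$\sup_{x_1,x_2\in\mathbb{R},\,x_1\ne x_2}\ \min_{x\in[a,b]}V(x,x_1,x_2)=q,$$ and the supremum is attained at $x_1=a-\tfrac12\ln q$, $x_2=b+\tfrac12\ln q$ (which satisfy $a\le x_1<x_2\le b$).
   Context: For the exponential kernel $K(x,y)=e^{-|x-y|}$ on $\mathbb{R}$ and $\mathcal{X}=\{x_1,x_2\}$, $V(x,x_1,x_2)$ equals $K(x,x)-\operatorname{dist}^2(K(x,\cdot),\operatorname{span}\{K(x_1,\cdot),K(x_2,\cdot)\})$ in the RKHS of $K$, so maximizing $\min_{x\in[a,b]}V$ is minimizing the worst-case reconstruction error on $[a,b]$ measured in the maximum norm. *)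

theory Defs
  imports "HOL-Analysis.Analysis"
begin

definition V :: "real \<Rightarrow> real \<Rightarrow> real \<Rightarrow> real" where
  "V x x1 x2 =
     (exp (-2 * \<bar>x1 - x\<bar>) + exp (-2 * \<bar>x2 - x\<bar>)
       - 2 * exp (-(\<bar>x1 - x\<bar> + \<bar>x2 - x\<bar> + \<bar>x1 - x2\<bar>)))
     / (1 - exp (-2 * \<bar>x1 - x2\<bar>))"

end

theory Submission
  imports Defs
begin

text \<open>
  Fix nodes \<open>x1 < x2\<close>.  Outside \<open>[x1, x2]\<close> one has \<open>V = exp(-2d)\<close>, \<open>d\<close> the distance to
  the nearer node; between the nodes \<open>V\<close> lies between the midpoint value \<open>2w/(1+w)\<close>,
  \<open>w = exp(-(x2 - x1))\<close>, and \<open>2s/(1+s)\<close>, \<open>s = exp(-2d)\<close>.  Choose \<open>\<rho>, \<delta> > 0\<close> with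
  \<open>q = exp(-2\<rho>)\<close> and \<open>q = 2 exp(-2\<delta>) / (1 + exp(-2\<delta>))\<close>; the quadratic equation defining
  \<open>q\<close> says exactly that \<open>L = 2(\<rho> + \<delta>)\<close>.

  Upper bound: the points where \<open>V > q\<close> lie in the two open intervals
  \<open>(x1 - \<rho>, x1 + \<delta>)\<close> and \<open>(x2 - \<delta>, x2 + \<rho>)\<close>, each of length \<open>L/2\<close>, and two such
  intervals cannot cover the closed interval \<open>[a, b]\<close> of length \<open>L\<close>.
  Lower bound: for the nodes \<open>a + \<rho>\<close> and \<open>b - \<rho>\<close>, which are \<open>2\<delta>\<close> apart, every point of
  \<open>[a, b]\<close> is within \<open>\<rho>\<close> of a node or between the nodes, so \<open>V \<ge> q\<close> there, with
  equality at \<open>a\<close>.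
\<close>


lemma V_sym: "V x x1 x2 = V x x2 x1"
  unfolding V_def by (simp add: abs_minus_commute add_ac)

lemma V_left:
  assumes "x \<le> x1" "x1 < x2"
  shows "V x x1 x2 = exp (-2 * (x1 - x))"
proof -
  have corner: "exp (-(\<bar>x1 - x\<bar> + \<bar>x2 - x\<bar> + \<bar>x1 - x2\<bar>)) = exp (-2 * (x1 - x)) * exp (-2 * (x2 - x1))"
   and far: "exp (-2 * \<bar>x2 - x\<bar>) = exp (-2 * (x1 - x)) * exp (-2 * (x2 - x1))"
    using assms by (simp_all add: algebra_simps flip: exp_add)
  have "exp (-2 * (x2 - x1)) < 1" using assms by simp
  then show ?thesis
    unfolding V_def corner far using assms by (simp add: field_simps)
qed

lemma V_right:
  assumes "x2 \<le> x" "x1 < x2"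
  shows "V x x1 x2 = exp (-2 * (x - x2))"
proof -
  have corner: "exp (-(\<bar>x1 - x\<bar> + \<bar>x2 - x\<bar> + \<bar>x1 - x2\<bar>)) = exp (-2 * (x - x2)) * exp (-2 * (x2 - x1))"
   and far: "exp (-2 * \<bar>x1 - x\<bar>) = exp (-2 * (x - x2)) * exp (-2 * (x2 - x1))"
    using assms by (simp_all add: algebra_simps flip: exp_add)
  have "exp (-2 * (x2 - x1)) < 1" using assms by simp
  then show ?thesis
    unfolding V_def corner far using assms by (simp add: field_simps)
qed

text \<open>Between the nodes, \<open>V\<close> is a rational function of the factors
  \<open>\<alpha> = exp(-(x - x1))\<close> and \<open>\<beta> = exp(-(x2 - x))\<close>, see \<open>V_between\<close>.\<close>
definition inner_V :: "real \<Rightarrow> real \<Rightarrow> real" where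
  "inner_V \<alpha> \<beta> = (\<alpha>\<^sup>2 + \<beta>\<^sup>2 - 2 * \<alpha>\<^sup>2 * \<beta>\<^sup>2) / (1 - \<alpha>\<^sup>2 * \<beta>\<^sup>2)"

lemma inner_V_sym: "inner_V \<alpha> \<beta> = inner_V \<beta> \<alpha>"
  unfolding inner_V_def by (simp add: algebra_simps)

lemma exp_double: "exp (-2 * u) = (exp (-u::real))\<^sup>2"
  by (simp add: power2_eq_square flip: exp_add)

lemma V_between:
  assumes "x1 \<le> x" "x \<le> x2"
  shows "V x x1 x2 = inner_V (exp (-(x - x1))) (exp (-(x2 - x)))"
proof -
  have "exp (-(\<bar>x1 - x\<bar> + \<bar>x2 - x\<bar> + \<bar>x1 - x2\<bar>)) = (exp (-(x - x1)))\<^sup>2 * (exp (-(x2 - x)))\<^sup>2"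
   and "exp (-2 * \<bar>x1 - x2\<bar>) = (exp (-(x - x1)))\<^sup>2 * (exp (-(x2 - x)))\<^sup>2"
   and "exp (-2 * \<bar>x1 - x\<bar>) = (exp (-(x - x1)))\<^sup>2"
   and "exp (-2 * \<bar>x2 - x\<bar>) = (exp (-(x2 - x)))\<^sup>2"
    using assms by (simp_all add: power2_eq_square algebra_simps flip: exp_add)
  then show ?thesis unfolding V_def inner_V_def by simp
qed

text \<open>Lower bound by the midpoint value, which depends only on \<open>\<alpha>\<beta>\<close> (AM--GM).\<close>
lemma inner_V_lower:
  assumes "0 < \<alpha>" "0 < \<beta>" "\<alpha> * \<beta> < 1"
  shows "2 * (\<alpha> * \<beta>) / (1 + \<alpha> * \<beta>) \<le> inner_V \<alpha> \<beta>"
proof -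
  have "(\<alpha> * \<beta>)\<^sup>2 < 1"
    using assms by (simp add: abs_square_less_1)
  then have den: "0 < 1 - \<alpha>\<^sup>2 * \<beta>\<^sup>2" by (simp add: power_mult_distrib)
  have "(\<alpha>\<^sup>2 + \<beta>\<^sup>2 - 2 * \<alpha>\<^sup>2 * \<beta>\<^sup>2) * (1 + \<alpha> * \<beta>) - 2 * (\<alpha> * \<beta>) * (1 - \<alpha>\<^sup>2 * \<beta>\<^sup>2)
        = (\<alpha> - \<beta>)\<^sup>2 * (1 + \<alpha> * \<beta>)"
    by (simp add: algebra_simps power2_eq_square)
  moreover have "0 \<le> (\<alpha> - \<beta>)\<^sup>2 * (1 + \<alpha> * \<beta>)" using assms by simp
  ultimately have cross: "2 * (\<alpha> * \<beta>) * (1 - \<alpha>\<^sup>2 * \<beta>\<^sup>2)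
      \<le> (\<alpha>\<^sup>2 + \<beta>\<^sup>2 - 2 * \<alpha>\<^sup>2 * \<beta>\<^sup>2) * (1 + \<alpha> * \<beta>)" by linarith
  have "0 < 1 + \<alpha> * \<beta>" using assms by (simp add: add_pos_pos)
  with cross den show ?thesis
    unfolding inner_V_def by (simp add: divide_simps mult.commute)
qed

text \<open>Upper bound by the value of the one-node profile \<open>2\<beta>\<^sup>2/(1+\<beta>\<^sup>2)\<close> of the larger factor.\<close>
lemma inner_V_upper:
  assumes "0 < \<alpha>" "\<alpha> \<le> \<beta>" "\<beta> \<le> 1" "\<alpha> * \<beta> < 1"
  shows "inner_V \<alpha> \<beta> \<le> 2 * \<beta>\<^sup>2 / (1 + \<beta>\<^sup>2)"
proof -
  have "(\<alpha> * \<beta>)\<^sup>2 < 1"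
    using assms by (simp add: abs_square_less_1)
  then have den: "0 < 1 - \<alpha>\<^sup>2 * \<beta>\<^sup>2" by (simp add: power_mult_distrib)
  have "(\<alpha>\<^sup>2 + \<beta>\<^sup>2 - 2 * \<alpha>\<^sup>2 * \<beta>\<^sup>2) * (1 + \<beta>\<^sup>2) - 2 * \<beta>\<^sup>2 * (1 - \<alpha>\<^sup>2 * \<beta>\<^sup>2)
        = - ((\<beta>\<^sup>2 - \<alpha>\<^sup>2) * (1 - \<beta>\<^sup>2))"
    by (simp add: algebra_simps power2_eq_square)
  also have "\<dots> \<le> 0"
    using assms by (simp add: power_mono power_le_one)
  moreover have "0 < 1 + \<beta>\<^sup>2" by (simp add: add_pos_nonneg)
  ultimately show ?thesis
    unfolding inner_V_def using den by (simp add: divide_simps mult.commute)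
qed

lemma two_frac_less_iff:
  fixes u v :: real
  assumes "0 \<le> u" "0 \<le> v"
  shows "2 * u / (1 + u) < 2 * v / (1 + v) \<longleftrightarrow> u < v"
  using assms by (simp add: divide_simps add_nonneg_pos algebra_simps)

text \<open>Positivity, needed for the infima over \<open>[a, b]\<close> to be bounded below.\<close>
lemma V_pos:
  assumes "x1 < x2"
  shows "0 < V x x1 x2"
proof -
  consider "x \<le> x1" | "x2 \<le> x" | "x1 \<le> x" "x \<le> x2" by linarith
  then show ?thesis
  proof cases
    case 3
    have "exp (-(x - x1)) * exp (-(x2 - x)) = exp (-(x2 - x1))" by (simp flip: exp_add)
    moreover have "exp (-(x2 - x1)) < 1" using assms by simp
    ultimately have "2 * exp (-(x2 - x1)) / (1 + exp (-(x2 - x1))) \<le> V x x1 x2"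
      using inner_V_lower[of "exp (-(x - x1))" "exp (-(x2 - x))"] V_between[OF 3] by simp
    moreover have "0 < 2 * exp (-(x2 - x1)) / (1 + exp (-(x2 - x1)))"
      by (simp add: add_pos_pos)
    ultimately show ?thesis by linarith
  qed (use assms V_left V_right in auto)
qed

lemma V_large_near_nodes:
  assumes "x1 < x2" "0 < \<rho>" "0 < \<delta>"
    and outer: "exp (-2 * \<rho>) < V x x1 x2"
    and inner: "2 * exp (-2 * \<delta>) / (1 + exp (-2 * \<delta>)) < V x x1 x2"
  shows "x \<in> {x1 - \<rho> <..< x1 + \<delta>} \<union> {x2 - \<delta> <..< x2 + \<rho>}"
proof -
  consider "x \<le> x1" | "x2 \<le> x" | "x1 \<le> x" "x \<le> x2" by linarith
  then show ?thesis
  proof cases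
    case 1
    then have "x1 - x < \<rho>" using outer V_left[OF 1 assms(1)] by simp
    then show ?thesis using 1 assms(3) by auto
  next
    case 2
    then have "x - x2 < \<rho>" using outer V_right[OF 2 assms(1)] by simp
    then show ?thesis using 2 assms(3) by auto
  next
    case 3
    define \<alpha> \<beta> where "\<alpha> = exp (-(x - x1))" and "\<beta> = exp (-(x2 - x))"
    have pos: "0 < \<alpha>" "0 < \<beta>" and le1: "\<alpha> \<le> 1" "\<beta> \<le> 1"
      using 3 unfolding \<alpha>_def \<beta>_def by auto
    have "\<alpha> * \<beta> = exp (-(x2 - x1))" unfolding \<alpha>_def \<beta>_def by (simp flip: exp_add)
    then have prod: "\<alpha> * \<beta> < 1" "\<beta> * \<alpha> < 1" using assms(1) by (simp_all add: mult.commute)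
    have V_eq: "V x x1 x2 = inner_V \<alpha> \<beta>" unfolding \<alpha>_def \<beta>_def by (rule V_between[OF 3])
    \<comment> \<open>Between the nodes, \<open>V\<close> is controlled by the nearer node, i.e. the larger factor.\<close>
    show ?thesis
    proof (cases "\<alpha> \<le> \<beta>")
      case True
      have "2 * exp (-2 * \<delta>) / (1 + exp (-2 * \<delta>)) < 2 * \<beta>\<^sup>2 / (1 + \<beta>\<^sup>2)"
        using inner inner_V_upper[OF pos(1) True le1(2) prod(1)] V_eq by linarith
      then have "exp (-2 * \<delta>) < \<beta>\<^sup>2" by (simp add: two_frac_less_iff)
      also have "\<beta>\<^sup>2 = exp (-2 * (x2 - x))" unfolding \<beta>_def by (rule exp_double[symmetric])
      finally have "x2 - x < \<delta>" by simp
      then show ?thesis using 3 assms(2) by auto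
    next
      case False
      have "2 * exp (-2 * \<delta>) / (1 + exp (-2 * \<delta>)) < 2 * \<alpha>\<^sup>2 / (1 + \<alpha>\<^sup>2)"
        using inner inner_V_upper[OF pos(2) _ le1(1) prod(2)] False V_eq inner_V_sym[of \<alpha> \<beta>] by linarith
      then have "exp (-2 * \<delta>) < \<alpha>\<^sup>2" by (simp add: two_frac_less_iff)
      also have "\<alpha>\<^sup>2 = exp (-2 * (x - x1))" unfolding \<alpha>_def by (rule exp_double[symmetric])
      finally have "x - x1 < \<delta>" by simp
      then show ?thesis using 3 assms(2) by auto
    qed
  qed
qed

lemma V_ge_near_nodes:
  assumes "x1 < x2" "x1 - \<rho> \<le> x" "x \<le> x2 + \<rho>"
    and outer: "q \<le> exp (-2 * \<rho>)"
    and inner: "q \<le> 2 * exp (-(x2 - x1)) / (1 + exp (-(x2 - x1)))"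
  shows "q \<le> V x x1 x2"
proof -
  consider "x \<le> x1" | "x2 \<le> x" | "x1 \<le> x" "x \<le> x2" by linarith
  then show ?thesis
  proof cases
    case 1
    have "exp (-2 * \<rho>) \<le> exp (-2 * (x1 - x))" using assms(2) by simp
    then show ?thesis using outer V_left[OF 1 assms(1)] by linarith
  next
    case 2
    have "exp (-2 * \<rho>) \<le> exp (-2 * (x - x2))" using assms(3) by simp
    then show ?thesis using outer V_right[OF 2 assms(1)] by linarith
  next
    case 3
    have "exp (-(x - x1)) * exp (-(x2 - x)) = exp (-(x2 - x1))" by (simp flip: exp_add)
    moreover have "exp (-(x2 - x1)) < 1" using assms(1) by simp
    ultimately show ?thesis
      using inner inner_V_lower[of "exp (-(x - x1))" "exp (-(x2 - x))"] V_between[OF 3] by simp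
  qed
qed

lemma interval_not_covered:
  fixes a b p1 p2 l :: real
  assumes "a \<le> b" "2 * l \<le> b - a"
  shows "\<not> {a..b} \<subseteq> {p1 <..< p1 + l} \<union> {p2 <..< p2 + l}"
proof
  assume cover: "{a..b} \<subseteq> {p1 <..< p1 + l} \<union> {p2 <..< p2 + l}"
  have "\<And>x. a \<le> x \<Longrightarrow> x \<le> b \<Longrightarrow> (p1 < x \<and> x < p1 + l) \<or> (p2 < x \<and> x < p2 + l)"
    using cover by auto
  from this[of a] this[of "p1 + l"] this[of "p2 + l"] assms show False by linarith
qed

lemma exists_point_below:
  assumes "a \<le> b" "y1 \<noteq> y2" "0 < \<rho>" "0 < \<delta>" "2 * (\<rho> + \<delta>) \<le> b - a"
    and outer: "exp (-2 * \<rho>) \<le> q"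
    and inner: "2 * exp (-2 * \<delta>) / (1 + exp (-2 * \<delta>)) \<le> q"
  shows "\<exists>x\<in>{a..b}. V x y1 y2 \<le> q"
proof -
  have ordered: "\<exists>x\<in>{a..b}. V x x1 x2 \<le> q" if "x1 < x2" for x1 x2
  proof (rule ccontr)
    assume "\<not> (\<exists>x\<in>{a..b}. V x x1 x2 \<le> q)"
    then have large: "q < V x x1 x2" if "x \<in> {a..b}" for x using that not_le by blast
    have "x \<in> {x1 - \<rho> <..< x1 - \<rho> + (\<rho> + \<delta>)} \<union> {x2 - \<delta> <..< x2 - \<delta> + (\<rho> + \<delta>)}"
      if "x \<in> {a..b}" for x
    proof -
      have "exp (-2 * \<rho>) < V x x1 x2" "2 * exp (-2 * \<delta>) / (1 + exp (-2 * \<delta>)) < V x x1 x2"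
        using outer inner large[OF that] by linarith+
      from V_large_near_nodes[OF \<open>x1 < x2\<close> assms(3,4) this] show ?thesis by (simp add: add.commute)
    qed
    then show False
      using interval_not_covered[OF assms(1), of "\<rho> + \<delta>"] assms(5) by blast
  qed
  show ?thesis
  proof (cases "y1 < y2")
    case False
    then show ?thesis using ordered[of y2 y1] assms(2) V_sym[of _ y1 y2] by simp
  qed (rule ordered)
qed

lemma INF_V_le:
  assumes "x \<in> {a..b}" "y1 \<noteq> y2"
  shows "(INF x\<in>{a..b}. V x y1 y2) \<le> V x y1 y2"
proof (rule cINF_lower[OF _ assms(1)])
  have "0 < V x y1 y2" for x
    using V_pos[of y1 y2 x] V_pos[of y2 y1 x] V_sym[of x y1 y2] assms(2) by (cases "y1 < y2") auto
  then show "bdd_below ((\<lambda>x. V x y1 y2) ` {a..b})"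
    by (intro bdd_belowI2[where m = 0]) (simp add: less_imp_le)
qed

lemma INF_V_optimal_nodes:
  assumes "0 < \<rho>" "0 < \<delta>" "b - a = 2 * (\<rho> + \<delta>)"
    and outer: "q = exp (-2 * \<rho>)"
    and inner: "q = 2 * exp (-2 * \<delta>) / (1 + exp (-2 * \<delta>))"
  shows "(INF x\<in>{a..b}. V x (a + \<rho>) (b - \<rho>)) = q"
proof -
  have gap: "(b - \<rho>) - (a + \<rho>) = 2 * \<delta>" using assms(3) by simp
  then have nodes: "a + \<rho> < b - \<rho>" using assms(2) by simp
  have "V a (a + \<rho>) (b - \<rho>) = q"
    using V_left[OF _ nodes] assms(1) outer by simp
  moreover have "q \<le> V x (a + \<rho>) (b - \<rho>)" if "x \<in> {a..b}" for x
    using V_ge_near_nodes[OF nodes, of \<rho> x q] that outer inner gap by simp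
  moreover have "a \<in> {a..b}" using assms by simp
  ultimately show ?thesis by (intro cInf_eq_minimum) auto
qed

lemma positive_root_facts:
  fixes t q :: real
  assumes "0 < t" "t < 1" "q = (- t + sqrt (t\<^sup>2 + 8 * t)) / 2"
  shows "0 < q" "q < 1" "t < q" "q\<^sup>2 + t * q = 2 * t"
proof -
  define s where "s = sqrt (t\<^sup>2 + 8 * t)"
  have s: "0 \<le> s" "s\<^sup>2 = t\<^sup>2 + 8 * t" unfolding s_def using assms by simp_all
  have "t\<^sup>2 < s\<^sup>2" "s\<^sup>2 < (2 + t)\<^sup>2" using s assms by (simp_all add: power2_eq_square algebra_simps)
  then have "t < s" "s < 2 + t" using s(1) assms(1) by (auto intro: power_less_imp_less_base)
  moreover have q: "q = (s - t) / 2" using assms s_def by simp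
  ultimately show "0 < q" "q < 1" by simp_all
  show root: "q\<^sup>2 + t * q = 2 * t" unfolding q using s(2) by (simp add: power2_eq_square field_simps)
  show "t < q"
  proof (rule ccontr)
    assume "\<not> t < q"
    then have "q\<^sup>2 + t * q \<le> t\<^sup>2 + t * t"
      using \<open>0 < q\<close> assms(1) by (intro add_mono power_mono mult_left_mono) auto
    moreover have "t\<^sup>2 + t * t < 2 * t" using assms by (simp add: power2_eq_square)
    ultimately show False using root by simp
  qed
qed

lemma minimax_parameters:
  fixes L :: real
  assumes "0 < L"
  obtains \<rho> \<delta> where "0 < \<rho>" "0 < \<delta>" "L = 2 * (\<rho> + \<delta>)"
    "(- exp (-L) + sqrt (exp (-2 * L) + 8 * exp (-L))) / 2 = exp (-2 * \<rho>)"
    "(- exp (-L) + sqrt (exp (-2 * L) + 8 * exp (-L))) / 2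
       = 2 * exp (-2 * \<delta>) / (1 + exp (-2 * \<delta>))"
proof -
  define t q where "t = exp (-L)" and "q = (- exp (-L) + sqrt (exp (-2 * L) + 8 * exp (-L))) / 2"
  have "exp (-2 * L) = t\<^sup>2" unfolding t_def by (rule exp_double)
  then have "q = (- t + sqrt (t\<^sup>2 + 8 * t)) / 2" unfolding q_def t_def by simp
  moreover have "0 < t" "t < 1" unfolding t_def using assms by simp_all
  ultimately have q: "0 < q" "q < 1" "t < q" "q\<^sup>2 + t * q = 2 * t"
    using positive_root_facts by blast+
  define \<rho> \<delta> where "\<rho> = - ln q / 2" and "\<delta> = - ln (t / q) / 2"
  have "exp (-2 * \<rho>) = q" "exp (-2 * \<delta>) = t / q"
    unfolding \<rho>_def \<delta>_def using q \<open>0 < t\<close> by simp_all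
  moreover have "2 * (t / q) / (1 + t / q) = q"
    using q \<open>0 < t\<close> by (simp add: divide_simps power2_eq_square algebra_simps)
  moreover have "L = 2 * (\<rho> + \<delta>)"
    unfolding \<rho>_def \<delta>_def t_def using q \<open>0 < t\<close> by (simp add: ln_div field_simps)
  moreover have "0 < \<rho>" "0 < \<delta>" unfolding \<rho>_def \<delta>_def using q \<open>0 < t\<close> by simp_all
  ultimately show ?thesis using that unfolding q_def by auto
qed

theorem mainTheorem8:
  fixes a b :: real
  assumes "a < b"
  defines "L \<equiv> b - a"
  defines "q \<equiv> (- exp (-L) + sqrt (exp (-2 * L) + 8 * exp (-L))) / 2"
  shows "(SUP p\<in>{(y1, y2). y1 \<noteq> y2}. INF x\<in>{a..b}. V x (fst p) (snd p)) = q
     \<and> (\<forall>y1 y2. y1 \<noteq> y2 \<longrightarrow> (INF x\<in>{a..b}. V x y1 y2) \<le> q)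
     \<and> a \<le> a - ln q / 2 \<and> a - ln q / 2 < b + ln q / 2 \<and> b + ln q / 2 \<le> b
     \<and> (INF x\<in>{a..b}. V x (a - ln q / 2) (b + ln q / 2)) = q"
proof -
  obtain \<rho> \<delta> where \<rho>\<delta>: "0 < \<rho>" "0 < \<delta>" "b - a = 2 * (\<rho> + \<delta>)"
    and outer: "q = exp (-2 * \<rho>)" and inner: "q = 2 * exp (-2 * \<delta>) / (1 + exp (-2 * \<delta>))"
    using minimax_parameters[of L] assms(1) unfolding q_def L_def by auto
  have nodes: "a - ln q / 2 = a + \<rho>" "b + ln q / 2 = b - \<rho>" using outer by simp_all
  have upper: "\<forall>y1 y2. y1 \<noteq> y2 \<longrightarrow> (INF x\<in>{a..b}. V x y1 y2) \<le> q"
  proof (intro allI impI)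
    fix y1 y2 :: real
    assume "y1 \<noteq> y2"
    then obtain x where "x \<in> {a..b}" "V x y1 y2 \<le> q"
      using exists_point_below[of a b y1 y2 \<rho> \<delta> q] assms(1) \<rho>\<delta> outer inner by auto
    then show "(INF x\<in>{a..b}. V x y1 y2) \<le> q" using INF_V_le[of x a b y1 y2] \<open>y1 \<noteq> y2\<close> by simp
  qed
  have optimal: "(INF x\<in>{a..b}. V x (a + \<rho>) (b - \<rho>)) = q"
    using INF_V_optimal_nodes[OF \<rho>\<delta> outer inner] .
  have "(SUP p\<in>{(y1, y2). y1 \<noteq> y2}. INF x\<in>{a..b}. V x (fst p) (snd p)) = q"
  proof (rule cSup_eq_maximum)
    show "q \<in> (\<lambda>p. INF x\<in>{a..b}. V x (fst p) (snd p)) ` {(y1, y2). y1 \<noteq> y2}"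
      using optimal \<rho>\<delta> by (intro image_eqI[where x = "(a + \<rho>, b - \<rho>)"]) auto
  qed (use upper in auto)
  then show ?thesis using upper optimal nodes \<rho>\<delta> by auto
qed

end
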